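(* Let $n\ge1$ and $0\le k\le n-1$. In $\mathbb Q[\lambda_1,\dots,\lambda_n]$, $$\sum_{i=1}^n \lambda_i^k\,\frac{\partial^k}{\partial\lambda_i^k}V(\lambda_1,\dots,\lambda_n) \;=\; k!\binom{n}{k+1}\,V(\lambda_1,\dots,\lambda_n),$$ where $V(\lambda_1,\dots,\lambda_n)=\prod_{1\le i<j\le n}(\lambda_j-\lambda_i)$.
   Context: $\lambda_1,\dots,\lambda_n$ are independent indeterminates. *)

theory Defs
  imports Complex_Main "HOL-Library.Poly_Mapping"
begin

text \<open>Multivariate polynomials over the rationals in indeterminates indexed by nat:
  a polynomial is a finitely supported map from monomials (exponent vectors,
  finitely supported nat \<Rightarrow> nat) to rational coefficients; multiplication is
  the convolution product provided by Poly_Mapping.\<close>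
type_synonym mpoly_rat = "(nat \<Rightarrow>\<^sub>0 nat) \<Rightarrow>\<^sub>0 rat"

definition Var :: "nat \<Rightarrow> mpoly_rat" where
  "Var i = Poly_Mapping.single (Poly_Mapping.single i 1) 1"

definition pdiff :: "nat \<Rightarrow> mpoly_rat \<Rightarrow> mpoly_rat" where
  "pdiff i p = (\<Sum>m\<in>Poly_Mapping.keys p.
      Poly_Mapping.single (m - Poly_Mapping.single i 1)
        (of_nat (Poly_Mapping.lookup m i) * Poly_Mapping.lookup p m))"

definition Vand :: "nat \<Rightarrow> mpoly_rat" where
  "Vand n = (\<Prod>(i, j)\<in>{(i, j). 1 \<le> i \<and> i < j \<and> j \<le> n}. Var j - Var i)"

end

theory Submission
  imports Defs "HOL-Combinatorics.Transposition"
begin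

text \<open>Every monomial of V has exponent vector \<open>(m\<^sub>1, \<dots>, m\<^sub>n)\<close> a permutation of
  \<open>(0, 1, \<dots>, n - 1)\<close>: each variable occurs in only n - 1 factors of V, and the coefficient of a
  monomial with two equal exponents vanishes because V is alternating. The operator
  \<open>\<lambda>\<^sub>i\<^sup>k \<partial>\<^sup>k/\<partial>\<lambda>\<^sub>i\<^sup>k\<close> multiplies each monomial by the falling factorial
  \<open>m\<^sub>i (m\<^sub>i - 1) \<cdots> (m\<^sub>i - k + 1) = k! (m\<^sub>i choose k)\<close>, so on every monomial of V the sum over i acts
  as the scalar \<open>k! ((0 choose k) + \<cdots> + (n - 1 choose k)) = k! (n choose k + 1)\<close>.\<close>

text \<open>The coefficient of \<open>x\<^sup>m\<close> in \<open>rename_vars \<sigma> p\<close> is that of \<open>x\<^sup>m \<^sup>\<circ> \<^sup>\<sigma>\<close> in p, so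
  \<open>rename_vars \<sigma>\<close> substitutes \<open>x\<^sub>\<sigma> \<^sub>i\<close> for \<open>x\<^sub>i\<close> (\<open>rename_vars_Var\<close>).\<close>

definition rename_vars :: "('a \<Rightarrow> 'a) \<Rightarrow> (('a \<Rightarrow>\<^sub>0 nat) \<Rightarrow>\<^sub>0 'b::zero) \<Rightarrow> ('a \<Rightarrow>\<^sub>0 nat) \<Rightarrow>\<^sub>0 'b"
  where "rename_vars \<sigma> p = Poly_Mapping.map_key (Poly_Mapping.map_key \<sigma>) p"

lemma lookup_map_key:
  "inj f \<Longrightarrow> Poly_Mapping.lookup (Poly_Mapping.map_key f p) x = Poly_Mapping.lookup p (f x)"
  by (simp add: map_key.rep_eq)

lemma bij_map_key:
  fixes \<sigma> :: "'a \<Rightarrow> 'a"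
  assumes "bij \<sigma>"
  shows "bij (Poly_Mapping.map_key \<sigma> :: ('a \<Rightarrow>\<^sub>0 'b::zero) \<Rightarrow> _)"
proof (rule o_bij)
  have inj: "inj \<sigma>" "inj (inv \<sigma>)"
    using assms by (simp_all add: bij_is_inj bij_imp_bij_inv)
  show "Poly_Mapping.map_key (inv \<sigma>) \<circ> Poly_Mapping.map_key \<sigma> = (id :: ('a \<Rightarrow>\<^sub>0 'b) \<Rightarrow> _)"
    "Poly_Mapping.map_key \<sigma> \<circ> Poly_Mapping.map_key (inv \<sigma>) = (id :: ('a \<Rightarrow>\<^sub>0 'b) \<Rightarrow> _)"
    using assms inj by (auto intro!: poly_mapping_eqI simp: fun_eq_iff lookup_map_key bij_is_surj surj_f_inv_f)
qed

lemma lookup_rename_vars: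
  "bij \<sigma> \<Longrightarrow> Poly_Mapping.lookup (rename_vars \<sigma> p) m = Poly_Mapping.lookup p (Poly_Mapping.map_key \<sigma> m)"
  by (simp add: rename_vars_def lookup_map_key bij_is_inj bij_map_key)

lemma rename_vars_mult:
  fixes p q :: "('a \<Rightarrow>\<^sub>0 nat) \<Rightarrow>\<^sub>0 'b::comm_semiring_1"
  assumes "bij \<sigma>"
  shows "rename_vars \<sigma> (p * q) = rename_vars \<sigma> p * rename_vars \<sigma> q"
proof (rule poly_mapping_eqI)
  fix m
  let ?\<rho> = "Poly_Mapping.map_key \<sigma> :: ('a \<Rightarrow>\<^sub>0 nat) \<Rightarrow> _"
  have bij: "bij ?\<rho>"
    using assms by (rule bij_map_key)
  have split_iff: "m = l + l' \<longleftrightarrow> ?\<rho> m = ?\<rho> l + ?\<rho> l'" for l l'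
    using assms bij by (metis bij_is_inj injD map_key_plus)
  have "Poly_Mapping.lookup (rename_vars \<sigma> p * rename_vars \<sigma> q) m =
      (\<Sum>l. Poly_Mapping.lookup p (?\<rho> l) *
        (\<Sum>l'. Poly_Mapping.lookup q (?\<rho> l') when ?\<rho> m = ?\<rho> l + ?\<rho> l'))"
    by (simp only: lookup_mult lookup_rename_vars[OF assms] split_iff)
  also have "\<dots> = (\<Sum>l. Poly_Mapping.lookup p (?\<rho> l) *
        (\<Sum>l'. Poly_Mapping.lookup q l' when ?\<rho> m = ?\<rho> l + l'))"
    by (intro Sum_any.cong arg_cong[where f="\<lambda>x. _ * x"] Sum_any.reindex_cong[OF bij, symmetric])
      (simp add: fun_eq_iff)
  also have "\<dots> = (\<Sum>l. Poly_Mapping.lookup p l *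
        (\<Sum>l'. Poly_Mapping.lookup q l' when ?\<rho> m = l + l'))"
    by (rule Sum_any.reindex_cong[OF bij, symmetric]) (simp add: fun_eq_iff)
  also have "\<dots> = Poly_Mapping.lookup (rename_vars \<sigma> (p * q)) m"
    using assms by (simp add: lookup_mult lookup_rename_vars)
  finally show "Poly_Mapping.lookup (rename_vars \<sigma> (p * q)) m =
      Poly_Mapping.lookup (rename_vars \<sigma> p * rename_vars \<sigma> q) m" ..
qed

lemma rename_vars_one:
  assumes "bij \<sigma>"
  shows "rename_vars \<sigma> (1 :: ('a \<Rightarrow>\<^sub>0 nat) \<Rightarrow>\<^sub>0 'b::comm_semiring_1) = 1"
proof (rule poly_mapping_eqI)
  fix m :: "'a \<Rightarrow>\<^sub>0 nat"
  have "Poly_Mapping.map_key \<sigma> m = 0 \<longleftrightarrow> m = 0"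
    using assms by (metis bij_is_inj bij_map_key injD map_key_zero)
  then show "Poly_Mapping.lookup (rename_vars \<sigma> 1) m = Poly_Mapping.lookup (1 :: ('a \<Rightarrow>\<^sub>0 nat) \<Rightarrow>\<^sub>0 'b) m"
    using assms by (simp add: lookup_rename_vars lookup_one)
qed

lemma rename_vars_prod:
  fixes f :: "'c \<Rightarrow> ('a \<Rightarrow>\<^sub>0 nat) \<Rightarrow>\<^sub>0 'b::comm_semiring_1"
  assumes "bij \<sigma>"
  shows "rename_vars \<sigma> (\<Prod>x\<in>S. f x) = (\<Prod>x\<in>S. rename_vars \<sigma> (f x))"
  by (induction S rule: infinite_finite_induct) (simp_all add: assms rename_vars_one rename_vars_mult)

lemma rename_vars_diff:
  "bij \<sigma> \<Longrightarrow> rename_vars \<sigma> (p - q) = rename_vars \<sigma> p - rename_vars \<sigma> (q :: (_ \<Rightarrow>\<^sub>0 nat) \<Rightarrow>\<^sub>0 'b::ab_group_add)"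
  by (rule poly_mapping_eqI) (simp add: lookup_rename_vars lookup_minus)

lemma rename_vars_Var:
  fixes \<sigma> :: "nat \<Rightarrow> nat"
  assumes "bij \<sigma>"
  shows "rename_vars \<sigma> (Var i) = Var (\<sigma> i)"
proof (rule poly_mapping_eqI)
  fix m :: "nat \<Rightarrow>\<^sub>0 nat"
  have single: "Poly_Mapping.single i 1 = Poly_Mapping.map_key \<sigma> (Poly_Mapping.single (\<sigma> i) (1::nat))"
    using assms by (simp add: bij_is_inj)
  have "Poly_Mapping.single i 1 = Poly_Mapping.map_key \<sigma> m \<longleftrightarrow> Poly_Mapping.single (\<sigma> i) 1 = m"
    using single inj_eq[OF bij_is_inj[OF bij_map_key[OF assms]]] by metis
  then show "Poly_Mapping.lookup (rename_vars \<sigma> (Var i)) m = Poly_Mapping.lookup (Var (\<sigma> i)) m"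
    by (simp only: Var_def lookup_rename_vars[OF assms] lookup_single)
qed

lemma lookup_le_sum_if_in_keys_prod:
  fixes f :: "'c \<Rightarrow> ('a \<Rightarrow>\<^sub>0 nat) \<Rightarrow>\<^sub>0 'b::comm_semiring_1"
  assumes "finite S" "m \<in> Poly_Mapping.keys (\<Prod>x\<in>S. f x)"
    and "\<And>x m'. x \<in> S \<Longrightarrow> m' \<in> Poly_Mapping.keys (f x) \<Longrightarrow> Poly_Mapping.lookup m' v \<le> d x"
  shows "Poly_Mapping.lookup m v \<le> (\<Sum>x\<in>S. d x)"
  using assms
proof (induction S arbitrary: m rule: finite_induct)
  case empty
  then show ?case by simp
next
  case (insert x S)
  then have "m \<in> Poly_Mapping.keys (f x * (\<Prod>x\<in>S. f x))"
    by simp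
  then obtain m1 m2 where "m = m1 + m2" "m1 \<in> Poly_Mapping.keys (f x)"
      "m2 \<in> Poly_Mapping.keys (\<Prod>x\<in>S. f x)"
    using keys_mult by blast
  then show ?case
    using insert.prems(2)[of x m1] insert.IH[of m2] insert.prems(2) insert.hyps
    by (simp add: lookup_add add_mono)
qed

lemma lookup_pdiff:
  "Poly_Mapping.lookup (pdiff i p) m =
     of_nat (Poly_Mapping.lookup m i + 1) * Poly_Mapping.lookup p (m + Poly_Mapping.single i 1)"
proof -
  define e where "e = Poly_Mapping.single i (1::nat)"
  define c where "c = (\<lambda>m'. of_nat (Poly_Mapping.lookup m' i) * Poly_Mapping.lookup p m' :: rat)"
  \<comment> \<open>a monomial \<open>m'\<close> with \<open>m' - e = m\<close> is either \<open>m + e\<close> or has no \<open>x\<^sub>i\<close>, and then \<open>c m' = 0\<close>\<close>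
  have contrib: "(c m' when m' - e = m) = (if m' = m + e then c m' else 0)" for m'
  proof (cases "Poly_Mapping.lookup m' i = 0")
    case False
    then have "m' - e = m \<longleftrightarrow> m' = m + e"
      by (auto simp: e_def poly_mapping_eq_iff fun_eq_iff lookup_minus lookup_add lookup_single when_def)
    then show ?thesis
      by simp
  next
    case True
    then show ?thesis
      by (auto simp: c_def e_def lookup_add)
  qed
  have "Poly_Mapping.lookup (pdiff i p) m = (\<Sum>m'\<in>Poly_Mapping.keys p. c m' when m' - e = m)"
    by (simp add: pdiff_def lookup_sum lookup_single c_def e_def)
  also have "\<dots> = c (m + e)"
    by (simp only: contrib) (simp add: c_def in_keys_iff)
  finally show ?thesis
    by (simp add: c_def e_def lookup_add)
qed

lemma lookup_funpow_pdiff: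
  "Poly_Mapping.lookup ((pdiff i ^^ k) p) m =
     of_nat (\<Prod>t<k. Poly_Mapping.lookup m i + k - t) * Poly_Mapping.lookup p (m + Poly_Mapping.single i k)"
proof (induction k arbitrary: m)
  case 0
  then show ?case by simp
next
  case (Suc k)
  let ?c = "Poly_Mapping.lookup m i"
  have shift: "m + Poly_Mapping.single i 1 + Poly_Mapping.single i k = m + Poly_Mapping.single i (Suc k)"
    by (simp add: add.assoc flip: single_add)
  have falling: "(\<Prod>t<Suc k. ?c + Suc k - t) = (?c + 1) * (\<Prod>t<k. ?c + 1 + k - t)"
    by simp
  have lookup_shift: "Poly_Mapping.lookup (m + Poly_Mapping.single i 1) i = ?c + 1"
    by (simp add: lookup_add)
  have "Poly_Mapping.lookup ((pdiff i ^^ Suc k) p) m =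
      of_nat (?c + 1) * Poly_Mapping.lookup ((pdiff i ^^ k) p) (m + Poly_Mapping.single i 1)"
    by (simp only: funpow.simps o_apply lookup_pdiff)
  also have "\<dots> = of_nat (?c + 1) *
      (of_nat (\<Prod>t<k. ?c + 1 + k - t) * Poly_Mapping.lookup p (m + Poly_Mapping.single i (Suc k)))"
    by (simp only: Suc.IH lookup_shift shift)
  also have "\<dots> = of_nat (\<Prod>t<Suc k. ?c + Suc k - t) * Poly_Mapping.lookup p (m + Poly_Mapping.single i (Suc k))"
    by (simp only: falling of_nat_mult mult_ac)
  finally show ?case .
qed

lemma Var_power: "Var i ^ k = Poly_Mapping.single (Poly_Mapping.single i k) 1"
  by (induction k) (simp_all add: Var_def mult_single add.commute flip: single_add)

lemma lookup_single_mult_add: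
  fixes q :: "('v \<Rightarrow>\<^sub>0 nat) \<Rightarrow>\<^sub>0 'b::comm_semiring_1"
  shows "Poly_Mapping.lookup (Poly_Mapping.single a c * q) (a + m) = c * Poly_Mapping.lookup q m"
  by (simp add: lookup_mult lookup_single when_mult Sum_any_right_distrib[symmetric])

lemma lookup_of_nat_mult:
  fixes p :: "('v \<Rightarrow>\<^sub>0 nat) \<Rightarrow>\<^sub>0 'b::comm_semiring_1"
  shows "Poly_Mapping.lookup (of_nat c * p) m = of_nat c * Poly_Mapping.lookup p m"
  using lookup_single_mult_add[of 0 "of_nat c" p m] by (simp only: single_of_nat add_0)

lemma lookup_single_mult_eq_0:
  fixes q :: "('v \<Rightarrow>\<^sub>0 nat) \<Rightarrow>\<^sub>0 'b::comm_semiring_1"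
  assumes "\<And>m'. m \<noteq> a + m'"
  shows "Poly_Mapping.lookup (Poly_Mapping.single a c * q) m = 0"
proof -
  have "(c when a = a') * (\<Sum>m'. Poly_Mapping.lookup q m' when m = a' + m') = 0" for a'
    using assms by (cases "a = a'") simp_all
  then show ?thesis
    by (simp add: lookup_mult lookup_single)
qed

lemma lookup_Var_power_mult_funpow_pdiff:
  "Poly_Mapping.lookup (Var i ^ k * (pdiff i ^^ k) p) m =
     of_nat (\<Prod>t<k. Poly_Mapping.lookup m i - t) * Poly_Mapping.lookup p m"
proof (cases "k \<le> Poly_Mapping.lookup m i")
  case True
  define m' where "m' = m - Poly_Mapping.single i k"
  have m: "Poly_Mapping.single i k + m' = m"
    using True by (simp add: m'_def poly_mapping_eq_iff fun_eq_iff lookup_minus lookup_add lookup_single when_def)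
  have falling: "(\<Prod>t<k. Poly_Mapping.lookup m' i + k - t) = (\<Prod>t<k. Poly_Mapping.lookup m i - t)"
    using True by (simp add: m'_def lookup_minus)
  have "Poly_Mapping.lookup (Var i ^ k * (pdiff i ^^ k) p) m = Poly_Mapping.lookup ((pdiff i ^^ k) p) m'"
    unfolding Var_power m[symmetric] by (simp add: lookup_single_mult_add)
  also have "\<dots> = of_nat (\<Prod>t<k. Poly_Mapping.lookup m' i + k - t) * Poly_Mapping.lookup p (m' + Poly_Mapping.single i k)"
    by (rule lookup_funpow_pdiff)
  also have "\<dots> = of_nat (\<Prod>t<k. Poly_Mapping.lookup m i - t) * Poly_Mapping.lookup p m"
    by (simp only: falling m[unfolded add.commute[of "Poly_Mapping.single i k"]])
  finally show ?thesis .
next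
  case False
  then have "m \<noteq> Poly_Mapping.single i k + m'" for m'
    by (auto simp: lookup_add)
  then have "Poly_Mapping.lookup (Var i ^ k * (pdiff i ^^ k) p) m = 0"
    unfolding Var_power by (rule lookup_single_mult_eq_0)
  moreover have "(\<Prod>t<k. Poly_Mapping.lookup m i - t) = 0"
    using False by (auto simp: prod_zero_iff intro!: bexI[of _ "Poly_Mapping.lookup m i"])
  ultimately show ?thesis
    by simp
qed

lemma falling_factorial_eq_fact_mult_choose:
  "(\<Prod>t<k. (a::nat) - t) = fact k * (a choose k)"
proof (induction k)
  case 0
  then show ?case by simp
next
  case (Suc k)
  have "(\<Prod>t<Suc k. a - t) = fact k * ((a - k) * (a choose k))"
    by (simp add: Suc)
  also have "(a - k) * (a choose k) = Suc k * (a choose Suc k)"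
    using binomial_absorb_comp[of a k] times_binomial_minus1_eq[of "Suc k" a] by simp
  finally show ?case
    by (simp add: algebra_simps)
qed

lemma sum_falling_factorial_lessThan:
  "(\<Sum>j<n. \<Prod>t<k. j - t) = fact k * (n choose Suc k)"
proof (cases n)
  case (Suc n')
  then show ?thesis
    by (simp add: falling_factorial_eq_fact_mult_choose lessThan_Suc_atMost sum_choose_upper
        flip: sum_distrib_left)
qed simp

definition Vand_pairs :: "nat \<Rightarrow> (nat \<times> nat) set" where
  "Vand_pairs n = {(i, j). 1 \<le> i \<and> i < j \<and> j \<le> n}"

lemma finite_Vand_pairs [simp]: "finite (Vand_pairs n)"
  by (rule finite_subset[of _ "{1..n} \<times> {1..n}"]) (auto simp: Vand_pairs_def)

lemma Vand_eq_prod_Vand_pairs: "Vand n = (\<Prod>(i, j)\<in>Vand_pairs n. Var j - Var i)"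
  by (simp add: Vand_def Vand_pairs_def)

lemma Vand_rename_transpose_Suc:
  assumes "1 \<le> a" "Suc a \<le> n"
  shows "rename_vars (transpose a (Suc a)) (Vand n) = - Vand n"
proof -
  let ?\<tau> = "transpose a (Suc a)"
  define P where "P = Vand_pairs n"
  define F where "F = (\<lambda>(i, j). Var j - Var i :: mpoly_rat)"
  have Vand: "Vand n = prod F P"
    by (simp add: Vand_eq_prod_Vand_pairs P_def F_def)
  have fin: "finite P"
    by (simp add: P_def)
  have pair: "(a, Suc a) \<in> P"
    using assms by (simp add: P_def Vand_pairs_def)
  have rename_F: "rename_vars ?\<tau> (F p) = F (map_prod ?\<tau> ?\<tau> p)" for p
    by (cases p) (simp add: F_def rename_vars_diff rename_vars_Var)
  have involutory: "map_prod ?\<tau> ?\<tau> (map_prod ?\<tau> ?\<tau> p) = p" for p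
    by (cases p) simp
  \<comment> \<open>swapping a and a + 1 keeps every other pair i < j in increasing order\<close>
  have maps: "map_prod ?\<tau> ?\<tau> p \<in> P - {(a, Suc a)}" if "p \<in> P - {(a, Suc a)}" for p
    using that assms by (cases p) (auto simp: P_def Vand_pairs_def transpose_def)
  have "bij_betw (map_prod ?\<tau> ?\<tau>) (P - {(a, Suc a)}) (P - {(a, Suc a)})"
    by (rule bij_betw_byWitness[where f' = "map_prod ?\<tau> ?\<tau>"])
      (simp_all only: involutory image_subsetI[OF maps] simp_thms Ball_def)
  then have others: "(\<Prod>p\<in>P - {(a, Suc a)}. F (map_prod ?\<tau> ?\<tau> p)) = prod F (P - {(a, Suc a)})"
    by (rule prod.reindex_bij_betw)
  have flip_factor: "F (Suc a, a) = - F (a, Suc a)"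
    by (simp add: F_def)
  have "rename_vars ?\<tau> (Vand n) = (\<Prod>p\<in>P. F (map_prod ?\<tau> ?\<tau> p))"
    by (simp add: Vand rename_vars_prod rename_F)
  also have "\<dots> = F (Suc a, a) * (\<Prod>p\<in>P - {(a, Suc a)}. F (map_prod ?\<tau> ?\<tau> p))"
    using fin pair by (simp add: prod.remove)
  also have "\<dots> = - (F (a, Suc a) * prod F (P - {(a, Suc a)}))"
    by (simp only: others flip_factor mult_minus_left)
  also have "\<dots> = - Vand n"
    using fin pair by (simp add: Vand prod.remove)
  finally show ?thesis .
qed

lemma lookup_Vand_eq_0_if_exponents_eq:
  assumes "1 \<le> a" "a < b" "b \<le> n" "Poly_Mapping.lookup m a = Poly_Mapping.lookup m b"
  shows "Poly_Mapping.lookup (Vand n) m = 0"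
  using assms
  \<comment> \<open>swapping \<open>x\<^sub>a\<close> and \<open>x\<^sub>a\<^sub>+\<^sub>1\<close> negates V and moves the repeated exponent from a to a + 1\<close>
proof (induction "b - a" arbitrary: a m)
  case 0
  then show ?case by simp
next
  case (Suc d)
  let ?\<tau> = "transpose a (Suc a)"
  let ?m' = "Poly_Mapping.map_key ?\<tau> m"
  have lookup_m': "Poly_Mapping.lookup ?m' x = Poly_Mapping.lookup m (?\<tau> x)" for x
    by (simp add: lookup_map_key inj_transpose)
  have "Poly_Mapping.lookup (Vand n) ?m' = Poly_Mapping.lookup (rename_vars ?\<tau> (Vand n)) m"
    by (simp add: lookup_rename_vars)
  also have "\<dots> = - Poly_Mapping.lookup (Vand n) m"
    using Suc.prems by (simp add: Vand_rename_transpose_Suc)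
  finally have antisym: "Poly_Mapping.lookup (Vand n) ?m' = - Poly_Mapping.lookup (Vand n) m" .
  show ?case
  proof (cases "b = Suc a")
    case True
    then have "?m' = m"
      using Suc.prems by (intro poly_mapping_eqI) (simp add: lookup_m' transpose_def)
    then show ?thesis
      using antisym by simp
  next
    case False
    have "Poly_Mapping.lookup ?m' (Suc a) = Poly_Mapping.lookup ?m' b"
      using Suc.prems False by (simp add: lookup_m')
    then have "Poly_Mapping.lookup (Vand n) ?m' = 0"
      using Suc.hyps(1)[of "Suc a" ?m'] Suc.prems Suc.hyps(2) False by simp
    then show ?thesis
      using antisym by simp
  qed
qed

lemma lookup_le_if_in_keys_Vand:
  assumes "m \<in> Poly_Mapping.keys (Vand n)"
  shows "Poly_Mapping.lookup m v \<le> n - 1"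
proof -
  define P where "P = Vand_pairs n"
  define Q where "Q = {p \<in> P. v = fst p \<or> v = snd p}"
  have fin: "finite P"
    by (simp add: P_def)
  have factor: "Poly_Mapping.lookup m' v \<le> (if v = fst p \<or> v = snd p then 1 else 0)"
    if "m' \<in> Poly_Mapping.keys ((case p of (i, j) \<Rightarrow> Var j - Var i) :: mpoly_rat)" for p m'
  proof -
    obtain i j where p: "p = (i, j)"
      by fastforce
    have "m' \<in> {Poly_Mapping.single j 1, Poly_Mapping.single i 1}"
      using that keys_diff by (fastforce simp: p Var_def)
    then show ?thesis
      by (auto simp: p lookup_single when_def)
  qed
  have card_Q: "card Q \<le> n - 1"
  proof (cases "v \<in> {1..n}")
    case True
    \<comment> \<open>every pair through \<open>v\<close> is determined by its other index\<close>
    have "card Q \<le> card ({1..n} - {v})"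
    proof (rule card_inj_on_le)
      show "inj_on (\<lambda>p. if fst p = v then snd p else fst p) Q"
        by (auto simp: inj_on_def Q_def P_def Vand_pairs_def split: if_splits)
      show "(\<lambda>p. if fst p = v then snd p else fst p) ` Q \<subseteq> {1..n} - {v}"
        by (auto simp: Q_def P_def Vand_pairs_def)
    qed simp
    then show ?thesis
      using True by simp
  next
    case False
    then have "Q = {}"
      by (auto simp: Q_def P_def Vand_pairs_def)
    then show ?thesis
      by simp
  qed
  have "Poly_Mapping.lookup m v \<le> (\<Sum>p\<in>P. if v = fst p \<or> v = snd p then 1 else 0)"
    using assms unfolding Vand_eq_prod_Vand_pairs P_def
    by (rule lookup_le_sum_if_in_keys_prod[OF fin[unfolded P_def] _ factor])
  also have "\<dots> = card Q"
    using fin by (simp add: Q_def sum.If_cases Int_def)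
  also have "\<dots> \<le> n - 1"
    by (fact card_Q)
  finally show ?thesis .
qed

lemma bij_betw_lookup_if_in_keys_Vand:
  assumes "m \<in> Poly_Mapping.keys (Vand n)"
  shows "bij_betw (Poly_Mapping.lookup m) {1..n} {..<n}"
proof -
  have inj: "inj_on (Poly_Mapping.lookup m) {1..n}"
  proof (rule inj_onI, rule ccontr)
    fix a b
    assume "a \<in> {1..n}" "b \<in> {1..n}" "Poly_Mapping.lookup m a = Poly_Mapping.lookup m b" "a \<noteq> b"
    then have "Poly_Mapping.lookup (Vand n) m = 0"
      using lookup_Vand_eq_0_if_exponents_eq[of a b n m] lookup_Vand_eq_0_if_exponents_eq[of b a n m]
      by (cases "a < b") auto
    then show False
      using assms by (simp add: in_keys_iff)
  qed
  moreover have "Poly_Mapping.lookup m ` {1..n} \<subseteq> {..<n}"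
  proof (rule image_subsetI)
    show "Poly_Mapping.lookup m l \<in> {..<n}" if "l \<in> {1..n}" for l
      using that lookup_le_if_in_keys_Vand[OF assms, of l] by auto
  qed
  moreover have "card (Poly_Mapping.lookup m ` {1..n}) = card {..<n}"
    using card_image[OF inj] by simp
  ultimately show ?thesis
    by (simp add: bij_betw_def card_subset_eq)
qed

theorem mainTheorem16:
  fixes n k :: nat
  assumes "n \<ge> 1" and "k \<le> n - 1"
  shows "(\<Sum>i = 1..n. Var i ^ k * (pdiff i ^^ k) (Vand n))
           = of_nat (fact k * (n choose (k + 1))) * Vand n"
proof (rule poly_mapping_eqI)
  fix m
  let ?N = "fact k * (n choose (k + 1))"
  have "Poly_Mapping.lookup (\<Sum>i = 1..n. Var i ^ k * (pdiff i ^^ k) (Vand n)) m =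
      of_nat (\<Sum>i = 1..n. \<Prod>t<k. Poly_Mapping.lookup m i - t) * Poly_Mapping.lookup (Vand n) m"
    by (simp add: lookup_sum lookup_Var_power_mult_funpow_pdiff sum_distrib_right)
  also have "\<dots> = of_nat ?N * Poly_Mapping.lookup (Vand n) m"
  proof (cases "m \<in> Poly_Mapping.keys (Vand n)")
    case True
    have "(\<Sum>i = 1..n. \<Prod>t<k. Poly_Mapping.lookup m i - t) = (\<Sum>j<n. \<Prod>t<k. j - t)"
      by (rule sum.reindex_bij_betw[OF bij_betw_lookup_if_in_keys_Vand[OF True]])
    then show ?thesis
      by (simp only: sum_falling_factorial_lessThan Suc_eq_plus1)
  qed (simp add: in_keys_iff)
  also have "\<dots> = Poly_Mapping.lookup (of_nat ?N * Vand n) m"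
    by (simp only: lookup_of_nat_mult)
  finally show "Poly_Mapping.lookup (\<Sum>i = 1..n. Var i ^ k * (pdiff i ^^ k) (Vand n)) m =
      Poly_Mapping.lookup (of_nat ?N * Vand n) m" .
qed

end
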